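(* (1) Invariance: if $t\to_w u$ then $t\equiv_S u$. (2) Compatibility: if $t\equiv_S u$ then $C\langle t\rangle\equiv_S C\langle u\rangle$ for every context $C$.
   Context: Terms: $t ::= x \mid \lambda x.t \mid t\,u \mid t[x\backslash u]$ ($t[x\backslash u]$ an explicit substitution binding $x$ in $t$; terms up to $\alpha$). Values $v ::= \lambda x.t$. Substitution contexts $S ::= \langle\cdot\rangle\mid S[x\backslash u]$. Weak contexts $W ::= \langle\cdot\rangle \mid W\,t \mid t\,W \mid t[x\backslash W] \mid W[x\backslash u]$; $W\langle\langle t\rangle\rangle$ is plugging without capture of free variables of $t$. Root rules: $S\langle\lambda x.t\rangle u\mapsto_m S\langle t[x\backslash u]\rangle$; $W\langle\langle x\rangle\rangle[x\backslash u]\mapsto_e W\langle\langle u\rangle\rangle[x\backslash u]$; $t[x\backslash S\langle v\rangle]\mapsto_{gcv} S\langle t\rangle$ if $x\notin\mathrm{fv}(t)$. $\to_w$ is the union of their closures under weak contexts. A context $C$ is a term with exactly one hole anywhere. Contextual equivalence $\equiv_S$: $t\equiv_S u$ iff for every context $C$ such that $C\langle t\rangle$ and $C\langle u\rangle$ are closed, $C\langle t\rangle$ is weakly $\to_w$-normalizing iff $C\langle u\rangle$ is. *)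

theory Defs
  imports Main
begin

text \<open>Terms up to alpha-equivalence, represented with de Bruijn indices.
  ES t u is the explicit substitution t[x\u], where x is index 0 bound in t.\<close>

datatype trm = Var nat | Lam trm | App trm trm | ES trm trm

fun ext :: "(nat \<Rightarrow> nat) \<Rightarrow> nat \<Rightarrow> nat" where
  "ext f 0 = 0"
| "ext f (Suc n) = Suc (f n)"

fun ren :: "(nat \<Rightarrow> nat) \<Rightarrow> trm \<Rightarrow> trm" where
  "ren f (Var n) = Var (f n)"
| "ren f (Lam t) = Lam (ren (ext f) t)"
| "ren f (App t u) = App (ren f t) (ren f u)"
| "ren f (ES t u) = ES (ren (ext f) t) (ren f u)"

definition lift :: "nat \<Rightarrow> trm \<Rightarrow> trm" where
  "lift k t = ren (\<lambda>n. n + k) t"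

fun fv :: "trm \<Rightarrow> nat set" where
  "fv (Var n) = {n}"
| "fv (Lam t) = {n. Suc n \<in> fv t}"
| "fv (App t u) = fv t \<union> fv u"
| "fv (ES t u) = {n. Suc n \<in> fv t} \<union> fv u"

definition closed :: "trm \<Rightarrow> bool" where
  "closed t \<longleftrightarrow> fv t = {}"

text \<open>Substitution contexts: list [u1,...,uk] stands for <.>[..\uk]...[..\u1]
  with u1 outermost; the hole lies under (length S) binders.\<close>
fun plugS :: "trm list \<Rightarrow> trm \<Rightarrow> trm" where
  "plugS [] t = t"
| "plugS (u # S) t = ES (plugS S t) u"

datatype wctx = WHole | WAppL wctx trm | WAppR trm wctx | WESR trm wctx | WESL wctx trm

fun plugW :: "wctx \<Rightarrow> trm \<Rightarrow> trm" where
  "plugW WHole t = t"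
| "plugW (WAppL W u) t = App (plugW W t) u"
| "plugW (WAppR u W) t = App u (plugW W t)"
| "plugW (WESR u W) t = ES u (plugW W t)"
| "plugW (WESL W u) t = ES (plugW W t) u"

fun bW :: "wctx \<Rightarrow> nat" where
  "bW WHole = 0"
| "bW (WAppL W u) = bW W"
| "bW (WAppR u W) = bW W"
| "bW (WESR u W) = bW W"
| "bW (WESL W u) = Suc (bW W)"

inductive root :: "trm \<Rightarrow> trm \<Rightarrow> bool" where
  rm: "root (App (plugS S (Lam t)) u) (plugS S (ES t (lift (length S) u)))"
| re: "root (ES (plugW W (Var (bW W))) u) (ES (plugW W (lift (Suc (bW W)) u)) u)"
| rgcv: "0 \<notin> fv t \<Longrightarrow>
    root (ES t (plugS S (Lam s))) (plugS S (ren (\<lambda>n. n - 1 + length S) t))"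

definition wstep :: "trm \<Rightarrow> trm \<Rightarrow> bool" where
  "wstep t u \<longleftrightarrow> (\<exists>W t0 u0. t = plugW W t0 \<and> u = plugW W u0 \<and> root t0 u0)"

definition wnorm :: "trm \<Rightarrow> bool" where
  "wnorm t \<longleftrightarrow> (\<exists>u. wstep\<^sup>*\<^sup>* t u \<and> \<not> (\<exists>u'. wstep u u'))"

text \<open>General contexts (one hole anywhere); plugging may capture.\<close>
datatype ctx = Hole | CLam ctx | CAppL ctx trm | CAppR trm ctx | CESL ctx trm | CESR trm ctx

fun plugC :: "ctx \<Rightarrow> trm \<Rightarrow> trm" where
  "plugC Hole t = t"
| "plugC (CLam C) t = Lam (plugC C t)"
| "plugC (CAppL C u) t = App (plugC C t) u"
| "plugC (CAppR u C) t = App u (plugC C t)"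
| "plugC (CESL C u) t = ES (plugC C t) u"
| "plugC (CESR u C) t = ES u (plugC C t)"

definition ctxeq :: "trm \<Rightarrow> trm \<Rightarrow> bool" where
  "ctxeq t u \<longleftrightarrow> (\<forall>C. closed (plugC C t) \<and> closed (plugC C u) \<longrightarrow>
                       (wnorm (plugC C t) \<longleftrightarrow> wnorm (plugC C u)))"

end

theory Submission
  imports Defs "HOL-Library.Multiset" "HOL-Library.Function_Algebras"
begin

text \<open>Weak normalisation of closed terms is characterised by typability in a non-idempotent
  intersection type system whose derivations carry their size. A typing of a term yields a strictly
  smaller typing of each of its weak reducts (subject reduction), so typable terms are weakly
  normalising. Conversely a typing of a reduct yields a typing of the redex (subject expansion), and
  closed weak normal forms are answers \<open>S\<langle>\<lambda>x.t\<rangle>\<close>, which are typable. Subject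
  expansion without the size bound survives any surrounding context, so whenever \<open>t \<rightarrow>\<^sub>w u\<close>
  the closed terms \<open>C\<langle>t\<rangle>\<close> and \<open>C\<langle>u\<rangle>\<close> are typable together, hence weakly normalising
  together. Compatibility is just composition of contexts.\<close>

section \<open>Quantitative types\<close>

datatype ty = Star | Arr "ty multiset" ty

type_synonym env = "nat \<Rightarrow> ty multiset"

definition single_env :: "nat \<Rightarrow> ty multiset \<Rightarrow> env" where
  "single_env k M = (\<lambda>i. if i = k then M else {#})"

definition env_tl :: "env \<Rightarrow> env" where
  "env_tl G = (\<lambda>i. G (Suc i))"

definition env_drop :: "nat \<Rightarrow> env \<Rightarrow> env" where
  "env_drop k G = (\<lambda>i. G (i + k))"

text \<open>\<open>has_ty G t s n\<close>: a derivation with \<open>n\<close> rules gives \<open>t\<close> the type \<open>s\<close>, where \<open>G i\<close>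
  is the multiset of types used for the free index \<open>i\<close>; \<open>has_mty\<close> types a term once for each
  element of a multiset. The argument of an application or
  explicit substitution receives one \<open>Star\<close> more than it is used: by value, it must itself be
  shown to evaluate to an abstraction.\<close>

inductive has_ty :: "env \<Rightarrow> trm \<Rightarrow> ty \<Rightarrow> nat \<Rightarrow> bool"
  and has_mty :: "env \<Rightarrow> trm \<Rightarrow> ty multiset \<Rightarrow> nat \<Rightarrow> bool" where
  Var: "has_ty (single_env k {#s#}) (Var k) s (Suc 0)"
| Star: "has_ty 0 (Lam t) Star (Suc 0)"
| Lam: "has_ty G t s n \<Longrightarrow> has_ty (env_tl G) (Lam t) (Arr (G 0) s) (Suc n)"
| App: "has_ty G t (Arr M s) n1 \<Longrightarrow> has_mty D u (add_mset Star M) n2 \<Longrightarrow>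
    has_ty (G + D) (App t u) s (Suc (n1 + n2))"
| ES: "has_ty G t s n1 \<Longrightarrow> has_mty D u (add_mset Star (G 0)) n2 \<Longrightarrow>
    has_ty (env_tl G + D) (ES t u) s (Suc (n1 + n2))"
| mempty: "has_mty 0 u {#} 0"
| madd: "has_ty G u s n \<Longrightarrow> has_mty D u M m \<Longrightarrow> has_mty (G + D) u (add_mset s M) (n + m)"

inductive_cases has_ty_VarE: "has_ty G (Var k) s n"
inductive_cases has_ty_LamE: "has_ty G (Lam t) s n"
inductive_cases has_ty_AppE: "has_ty G (App t u) s n"
inductive_cases has_ty_ESE: "has_ty G (ES t u) s n"
inductive_cases has_mty_emptyE: "has_mty G u {#} n"

lemma env_plus_eta [simp]: "(\<lambda>i. G i + D i) = G + (D :: env)"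
  and env_zero_eta [simp]: "(\<lambda>i. {#}) = (0 :: env)"
  by (simp_all add: plus_fun_def zero_fun_def)

lemma env_tl_apply [simp]: "env_tl G i = G (Suc i)"
  by (simp add: env_tl_def)

lemma env_drop_apply [simp]: "env_drop k G i = G (i + k)"
  by (simp add: env_drop_def)

lemma env_tl_add [simp]: "env_tl (G + D) = env_tl G + env_tl D"
  and env_tl_zero [simp]: "env_tl 0 = 0"
  and env_drop_add [simp]: "env_drop k (G + D) = env_drop k G + env_drop k D"
  and env_drop_zero [simp]: "env_drop k 0 = 0"
  and env_drop_0 [simp]: "env_drop 0 G = G"
  and env_tl_env_drop: "env_tl (env_drop k G) = env_drop (Suc k) G"
  by (auto simp: env_tl_def env_drop_def)

lemma single_env_union: "single_env k (M + N) = single_env k M + single_env k N"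
  and single_env_empty [simp]: "single_env k {#} = 0"
  by (auto simp: single_env_def)

lemma env_drop_single_env: "k < j \<Longrightarrow> env_drop j (single_env k M) = 0"
  by (auto simp: single_env_def)

lemma has_ty_Var_iff: "has_ty G (Var k) s n \<longleftrightarrow> G = single_env k {#s#} \<and> n = Suc 0"
  by (auto elim: has_ty_VarE intro: has_ty_has_mty.Var)

lemma has_ty_Lam_iff: "has_ty G (Lam t) s n \<longleftrightarrow> (G = 0 \<and> s = Star \<and> n = Suc 0) \<or>
   (\<exists>G' s' n'. has_ty G' t s' n' \<and> G = env_tl G' \<and> s = Arr (G' 0) s' \<and> n = Suc n')"
  by (auto elim: has_ty_LamE intro: has_ty_has_mty.intros)

lemma has_ty_App_iff: "has_ty G (App t u) s n \<longleftrightarrow> (\<exists>G1 M n1 D n2.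
   has_ty G1 t (Arr M s) n1 \<and> has_mty D u (add_mset Star M) n2 \<and> G = G1 + D \<and> n = Suc (n1 + n2))"
  by (rule iffI, erule has_ty_AppE, blast) (auto intro: has_ty_has_mty.intros)

lemma has_ty_ES_iff: "has_ty G (ES t u) s n \<longleftrightarrow> (\<exists>G' n1 D n2.
   has_ty G' t s n1 \<and> has_mty D u (add_mset Star (G' 0)) n2 \<and> G = env_tl G' + D \<and> n = Suc (n1 + n2))"
  by (rule iffI, erule has_ty_ESE, blast) (auto intro: has_ty_has_mty.intros)

lemma has_mty_empty_iff: "has_mty G u {#} n \<longleftrightarrow> G = 0 \<and> n = 0"
  by (auto elim: has_mty_emptyE intro: mempty)

lemma has_mty_remove:
  assumes "has_mty G u M n" "s \<in># M"
  shows "\<exists>G1 G2 n1 n2. has_ty G1 u s n1 \<and> has_mty G2 u (M - {#s#}) n2 \<and> G = G1 + G2 \<and> n = n1 + n2"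
  using assms
proof (induction rule: has_ty_has_mty.inducts(2)[of _ _ _ _ "\<lambda>_ _ _ _. True"])
  case (madd G u s' n D M m)
  show ?case
  proof (cases "s' = s")
    case False
    with madd obtain G1 G2 n1 n2 where split:
      "has_ty G1 u s n1" "has_mty G2 u (M - {#s#}) n2" "D = G1 + G2" "m = n1 + n2" by auto
    have "has_mty (G + G2) u (add_mset s' (M - {#s#})) (n + n2)"
      using madd.hyps(1) split(2) by (rule has_ty_has_mty.madd)
    moreover from False have "add_mset s' (M - {#s#}) = add_mset s' M - {#s#}" by auto
    moreover have "G + D = G1 + (G + G2)" "n + m = n1 + (n + n2)"
      using split by (simp_all add: ac_simps)
    ultimately show ?thesis using split(1) by metis
  qed (use madd in auto)
qed auto

lemma has_mty_add_mset_iff: "has_mty G u (add_mset s M) n \<longleftrightarrow>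
   (\<exists>G1 G2 n1 n2. has_ty G1 u s n1 \<and> has_mty G2 u M n2 \<and> G = G1 + G2 \<and> n = n1 + n2)"
  using has_mty_remove[of G u "add_mset s M" n s] by (auto intro: madd)

lemma has_mty_single_iff: "has_mty G u {#s#} n \<longleftrightarrow> has_ty G u s n"
  by (auto simp: has_mty_add_mset_iff has_mty_empty_iff)

lemma has_mty_union:
  "has_mty G1 u M n1 \<Longrightarrow> has_mty G2 u N n2 \<Longrightarrow> has_mty (G1 + G2) u (M + N) (n1 + n2)"
proof (induction M arbitrary: G1 n1)
  case (add s M)
  then obtain G0 G1' n0 n1' where
    "has_ty G0 u s n0" "has_mty G1' u M n1'" "G1 = G0 + G1'" "n1 = n0 + n1'"
    by (auto simp: has_mty_add_mset_iff)
  with add.IH[of G1' n1'] add.prems(2) show ?case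
    by (metis add.assoc has_ty_has_mty.madd union_mset_add_mset_left)
qed (simp add: has_mty_empty_iff)

lemma has_mty_union_iff: "has_mty G u (M + N) n \<longleftrightarrow>
   (\<exists>G1 G2 n1 n2. has_mty G1 u M n1 \<and> has_mty G2 u N n2 \<and> G = G1 + G2 \<and> n = n1 + n2)"
proof (induction M arbitrary: G n)
  case (add s M)
  show ?case
  proof
    assume "has_mty G u (add_mset s M + N) n"
    then obtain G0 n0 G1 G2 n1 n2 where "has_ty G0 u s n0" "has_mty G1 u M n1" "has_mty G2 u N n2"
      "G = G0 + (G1 + G2)" "n = n0 + (n1 + n2)"
      by (auto simp: has_mty_add_mset_iff add.IH)
    then show "\<exists>G1 G2 n1 n2. has_mty G1 u (add_mset s M) n1 \<and> has_mty G2 u N n2 \<and> G = G1 + G2 \<and> n = n1 + n2"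
      by (metis add.assoc has_ty_has_mty.madd)
  qed (use has_mty_union in blast)
qed (auto simp: has_mty_empty_iff)

lemma has_mty_Var_iff: "has_mty G (Var k) M n \<longleftrightarrow> G = single_env k M \<and> n = size M"
proof (induction M arbitrary: G n)
  case (add s M)
  have "single_env k (add_mset s M) = single_env k {#s#} + single_env k M"
    by (metis add_mset_add_single single_env_union union_commute)
  then show ?case by (auto simp: has_mty_add_mset_iff add.IH has_ty_Var_iff)
qed (auto simp: has_mty_empty_iff)

lemma has_ty_env_fv:
  "(has_ty G t s n \<longrightarrow> (\<forall>i. G i \<noteq> {#} \<longrightarrow> i \<in> fv t))
 \<and> (has_mty D u M m \<longrightarrow> (\<forall>i. D i \<noteq> {#} \<longrightarrow> i \<in> fv u))"
  by (induction rule: has_ty_has_mty.induct) (auto simp: single_env_def)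

lemma has_ty_env_notin_fv: "has_ty G t s n \<Longrightarrow> i \<notin> fv t \<Longrightarrow> G i = {#}"
  and has_mty_env_notin_fv: "has_mty G t M n \<Longrightarrow> i \<notin> fv t \<Longrightarrow> G i = {#}"
  using has_ty_env_fv by blast+

section \<open>Renaming\<close>

lemma inj_ext: "inj f \<Longrightarrow> inj (ext f)"
proof (rule injI)
  fix x y assume "inj f" "ext f x = ext f y"
  then show "x = y" by (cases x; cases y) (auto dest: injD)
qed

lemma ext_comp: "ext (f \<circ> g) = ext f \<circ> ext g"
proof
  fix n show "ext (f \<circ> g) n = (ext f \<circ> ext g) n" by (cases n) auto
qed

lemma ext_ident: "ext (\<lambda>x. x) = (\<lambda>x. x)"
proof
  fix n show "ext (\<lambda>x. x) n = n" by (cases n) auto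
qed

lemma ren_ren: "ren f (ren g t) = ren (f \<circ> g) t"
  by (induction t arbitrary: f g) (auto simp: ext_comp)

lemma ren_ident: "ren (\<lambda>x. x) t = t"
  by (induction t) (auto simp: ext_ident)

lemma ren_cong: "(\<And>x. x \<in> fv t \<Longrightarrow> f x = g x) \<Longrightarrow> ren f t = ren g t"
proof (induction t arbitrary: f g)
  case (Lam t)
  have "ext f x = ext g x" if "x \<in> fv t" for x
    using Lam.prems that by (cases x) auto
  then have "ren (ext f) t = ren (ext g) t" by (rule Lam.IH)
  then show ?case by simp
next
  case (ES t u)
  have "ext f x = ext g x" if "x \<in> fv t" for x
    using ES.prems that by (cases x) auto
  then have "ren (ext f) t = ren (ext g) t" by (rule ES.IH(1))
  moreover have "ren f u = ren g u" by (rule ES.IH(2)) (simp add: ES.prems)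
  ultimately show ?case by simp
next
  case (App t u)
  have "ren f t = ren g t" "ren f u = ren g u"
    by (rule App.IH(1), simp add: App.prems) (rule App.IH(2), simp add: App.prems)
  then show ?case by simp
qed simp

lemma Suc_eq_ext_iff: "Suc n = ext f x \<longleftrightarrow> (\<exists>m. x = Suc m \<and> n = f m)"
  by (cases x) auto

lemma fv_ren: "fv (ren f t) = f ` fv t"
proof -
  have Suc_ext_image: "{n. Suc n \<in> ext f ` A} = f ` {m. Suc m \<in> A}" for f A
    by (auto simp: image_iff Suc_eq_ext_iff)
  show ?thesis
    by (induction t arbitrary: f) (auto simp: Suc_ext_image image_Un)
qed

lemma fv_lift: "fv (lift k t) = (\<lambda>n. n + k) ` fv t"
  by (simp add: lift_def fv_ren)

lemma fv_lift_Suc_disjoint: "fv (lift (Suc k) u) \<inter> {..<k} = {}"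
  by (auto simp: fv_lift)

lemma ren_Suc_ren_pred:
  assumes "0 \<notin> fv t"
  shows "ren Suc (ren (\<lambda>n. n - 1) t) = t"
proof -
  have "Suc (x - 1) = x" if "x \<in> fv t" for x
    using assms that by (cases x) auto
  then have "ren (Suc \<circ> (\<lambda>n. n - 1)) t = ren (\<lambda>x. x) t"
    by (intro ren_cong) simp
  then show ?thesis by (simp add: ren_ren ren_ident)
qed

lemma lift_ren_pred: "lift k (ren (\<lambda>n. n - 1) t) = ren (\<lambda>n. n - 1 + k) t"
  by (simp add: lift_def ren_ren comp_def)

definition env_ren :: "(nat \<Rightarrow> nat) \<Rightarrow> env \<Rightarrow> env" where
  "env_ren f G = (\<lambda>j. if j \<in> range f then G (inv f j) else {#})"

lemma env_ren_add [simp]: "env_ren f (G + D) = env_ren f G + env_ren f D"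
  and env_ren_zero [simp]: "env_ren f 0 = 0"
  by (auto simp: env_ren_def)

lemma env_ren_apply: "inj f \<Longrightarrow> env_ren f G (f i) = G i"
  by (simp add: env_ren_def)

lemma env_ren_eqI:
  assumes "inj f" "\<And>i. H (f i) = G i" "\<And>j. j \<notin> range f \<Longrightarrow> H j = {#}"
  shows "env_ren f G = H"
  using assms by (auto simp: env_ren_def fun_eq_iff)

lemma env_ren_single_env: "inj f \<Longrightarrow> env_ren f (single_env k M) = single_env (f k) M"
  by (rule env_ren_eqI) (auto simp: single_env_def inj_eq)

lemma env_ren_ext_0 [simp]: "inj f \<Longrightarrow> env_ren (ext f) G 0 = G 0"
  using env_ren_apply[OF inj_ext, of f G 0] by simp

lemma env_tl_env_ren_ext:
  assumes f: "inj f"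
  shows "env_tl (env_ren (ext f) G) = env_ren f (env_tl G)"
proof (rule sym, rule env_ren_eqI[OF f])
  show "env_tl (env_ren (ext f) G) (f i) = env_tl G i" for i
    using env_ren_apply[OF inj_ext[OF f], of G "Suc i"] by simp
  show "env_tl (env_ren (ext f) G) j = {#}" if "j \<notin> range f" for j
    using that by (auto simp: env_ren_def Suc_eq_ext_iff)
qed

lemma has_ty_has_mty_ren:
  "(has_ty G t s n \<longrightarrow> (\<forall>f. inj f \<longrightarrow> has_ty (env_ren f G) (ren f t) s n))
 \<and> (has_mty D u M m \<longrightarrow> (\<forall>f. inj f \<longrightarrow> has_mty (env_ren f D) (ren f u) M m))"
proof (induction rule: has_ty_has_mty.induct)
  case (Var k s)
  then show ?case by (auto simp: env_ren_single_env intro: has_ty_has_mty.Var)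
next
  case (Lam G t s n)
  have "has_ty (env_ren f (env_tl G)) (ren f (Lam t)) (Arr (G 0) s) (Suc n)" if f: "inj f" for f
    using has_ty_has_mty.Lam[of "env_ren (ext f) G" "ren (ext f) t" s n] Lam.IH f
    by (simp add: inj_ext env_tl_env_ren_ext)
  then show ?case by blast
next
  case (ES G t s n1 D u n2)
  have "has_ty (env_ren f (env_tl G + D)) (ren f (ES t u)) s (Suc (n1 + n2))" if f: "inj f" for f
    using has_ty_has_mty.ES[of "env_ren (ext f) G" "ren (ext f) t" s n1 "env_ren f D" "ren f u" n2] ES.IH f
    by (simp add: inj_ext env_tl_env_ren_ext)
  then show ?case by blast
qed (auto intro: has_ty_has_mty.intros)

lemma has_ty_ren: "has_ty G t s n \<Longrightarrow> inj f \<Longrightarrow> has_ty (env_ren f G) (ren f t) s n"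
  and has_mty_ren: "has_mty G t M n \<Longrightarrow> inj f \<Longrightarrow> has_mty (env_ren f G) (ren f t) M n"
  using has_ty_has_mty_ren by blast+

lemma has_mty_unren_of_has_ty_unren:
  assumes "\<And>G s n. has_ty G (ren f t) s n \<Longrightarrow> \<exists>G0. has_ty G0 t s n \<and> G = env_ren f G0"
  shows "has_mty G (ren f t) M n \<Longrightarrow> \<exists>G0. has_mty G0 t M n \<and> G = env_ren f G0"
proof (induction M arbitrary: G n)
  case (add s M)
  then obtain G1 G2 n1 n2 where
    "has_ty G1 (ren f t) s n1" "has_mty G2 (ren f t) M n2" "G = G1 + G2" "n = n1 + n2"
    by (auto simp: has_mty_add_mset_iff)
  moreover from this assms add.IH obtain A B where
    "has_ty A t s n1" "G1 = env_ren f A" "has_mty B t M n2" "G2 = env_ren f B"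
    by meson
  ultimately show ?case by (auto intro!: exI[of _ "A + B"] madd)
qed (auto simp: has_mty_empty_iff intro: mempty)

lemma has_ty_unren: "inj f \<Longrightarrow> has_ty G (ren f t) s n \<Longrightarrow> \<exists>G0. has_ty G0 t s n \<and> G = env_ren f G0"
proof (induction t arbitrary: f G s n)
  case (Var k)
  then show ?case by (auto simp: has_ty_Var_iff env_ren_single_env)
next
  case (Lam t)
  from Lam.prems(2) consider "G = 0" "s = Star" "n = Suc 0"
    | G' s' n' where "has_ty G' (ren (ext f) t) s' n'" "G = env_tl G'" "s = Arr (G' 0) s'" "n = Suc n'"
    by (auto simp: has_ty_Lam_iff)
  then show ?case
  proof cases
    case 1
    then show ?thesis by (auto intro: has_ty_has_mty.Star)
  next
    case 2
    with Lam.IH[OF inj_ext[OF Lam.prems(1)]] obtain G0 where "has_ty G0 t s' n'" "G' = env_ren (ext f) G0"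
      by blast
    with 2 Lam.prems(1) show ?thesis
      by (auto simp: env_tl_env_ren_ext intro!: exI[of _ "env_tl G0"] has_ty_has_mty.Lam)
  qed
next
  case (App t u)
  from App.prems(2) obtain G1 M n1 D n2 where
    "has_ty G1 (ren f t) (Arr M s) n1" "has_mty D (ren f u) (add_mset Star M) n2" "G = G1 + D" "n = Suc (n1 + n2)"
    by (auto simp: has_ty_App_iff)
  moreover from this App.IH App.prems(1) has_mty_unren_of_has_ty_unren[of f u] obtain A B where
    "has_ty A t (Arr M s) n1" "G1 = env_ren f A" "has_mty B u (add_mset Star M) n2" "D = env_ren f B"
    by meson
  ultimately show ?case by (auto intro!: exI[of _ "A + B"] has_ty_has_mty.App)
next
  case (ES t u)
  from ES.prems(2) obtain G' n1 D n2 where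
    "has_ty G' (ren (ext f) t) s n1" "has_mty D (ren f u) (add_mset Star (G' 0)) n2"
    "G = env_tl G' + D" "n = Suc (n1 + n2)"
    by (auto simp: has_ty_ES_iff)
  moreover from this ES.IH(1)[OF inj_ext[OF ES.prems(1)]] obtain A where
    A: "has_ty A t s n1" "G' = env_ren (ext f) A"
    by meson
  moreover from calculation ES.IH(2) ES.prems(1) has_mty_unren_of_has_ty_unren[of f u] obtain B where
    B: "has_mty B u (add_mset Star (A 0)) n2" "D = env_ren f B"
    by (metis env_ren_ext_0)
  ultimately have "has_ty (env_tl A + B) (ES t u) s n" "G = env_ren f (env_tl A + B)"
    using has_ty_has_mty.ES[OF A(1) B(1)] ES.prems(1) by (simp_all add: env_tl_env_ren_ext)
  then show ?case by blast
qed

lemma has_mty_unren: "inj f \<Longrightarrow> has_mty G (ren f t) M n \<Longrightarrow> \<exists>G0. has_mty G0 t M n \<and> G = env_ren f G0"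
  using has_mty_unren_of_has_ty_unren has_ty_unren by blast

lemma inj_shift: "inj (\<lambda>x::nat. x + k)"
  by (rule injI) simp

lemma has_ty_lift: "has_ty G t s n \<Longrightarrow> has_ty (env_ren (\<lambda>x. x + k) G) (lift k t) s n"
  and has_mty_lift: "has_mty D u M m \<Longrightarrow> has_mty (env_ren (\<lambda>x. x + k) D) (lift k u) M m"
  unfolding lift_def by (simp_all add: has_ty_ren has_mty_ren inj_shift)

lemma has_ty_unlift: "has_ty G (lift k t) s n \<Longrightarrow> \<exists>G0. has_ty G0 t s n \<and> G = env_ren (\<lambda>x. x + k) G0"
  and has_mty_unlift: "has_mty D (lift k u) M m \<Longrightarrow> \<exists>D0. has_mty D0 u M m \<and> D = env_ren (\<lambda>x. x + k) D0"
  unfolding lift_def by (simp_all add: has_ty_unren has_mty_unren inj_shift)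

lemma env_ren_shift_below: "i < k \<Longrightarrow> env_ren (\<lambda>x. x + k) D i = {#}"
  by (auto simp: env_ren_def)

lemma env_drop_env_ren_shift: "env_drop k (env_ren (\<lambda>x. x + k) D) = D"
  by (rule ext) (simp add: env_ren_apply[OF inj_shift])

lemma env_ren_Suc_0: "env_ren Suc G 0 = {#}"
  by (simp add: env_ren_def)

lemma env_tl_env_ren_Suc: "env_tl (env_ren Suc G) = G"
  by (rule ext) (simp add: env_ren_apply[OF inj_Suc])

section \<open>Typings of terms in contexts\<close>

lemma has_ty_plugS_split:
  "has_ty G (plugS S b) s n \<Longrightarrow> \<exists>Gb nb Gs ns. has_ty Gb b s nb \<and> G = Gs + env_drop (length S) Gb \<and> n = ns + nb \<and>
   (\<forall>b' Gb' s' nb'. has_ty Gb' b' s' nb' \<longrightarrow> (\<forall>i<length S. Gb' i = Gb i) \<longrightarrow>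
      has_ty (Gs + env_drop (length S) Gb') (plugS S b') s' (ns + nb'))"
proof (induction S arbitrary: G s n)
  case Nil
  then show ?case by (intro exI[of _ G] exI[of _ n] exI[of _ 0]) simp
next
  case (Cons u S)
  from Cons.prems obtain G1 n1 D n2 where h: "has_ty G1 (plugS S b) s n1" "has_mty D u (add_mset Star (G1 0)) n2"
    "G = env_tl G1 + D" "n = Suc (n1 + n2)"
    by (auto simp: has_ty_ES_iff)
  from Cons.IH[OF h(1)] obtain Gb nb Gs ns where split: "has_ty Gb b s nb" "G1 = Gs + env_drop (length S) Gb" "n1 = ns + nb"
    "\<forall>b' Gb' s' nb'. has_ty Gb' b' s' nb' \<longrightarrow> (\<forall>i<length S. Gb' i = Gb i) \<longrightarrow>
      has_ty (Gs + env_drop (length S) Gb') (plugS S b') s' (ns + nb')" by blast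
  show ?case
  proof (intro exI conjI allI impI)
    show "G = (env_tl Gs + D) + env_drop (length (u # S)) Gb"
      using h split by (simp add: env_tl_env_drop ac_simps)
    show "n = Suc (ns + n2) + nb" using h split by simp
  next
    fix b' Gb' s' nb' assume b': "has_ty Gb' b' s' nb'" "\<forall>i<length (u # S). Gb' i = Gb i"
    then have "has_ty (Gs + env_drop (length S) Gb') (plugS S b') s' (ns + nb')"
      using split(4) by simp
    moreover have "(Gs + env_drop (length S) Gb') 0 = G1 0" using b'(2) split(2) by simp
    ultimately have "has_ty (env_tl (Gs + env_drop (length S) Gb') + D) (ES (plugS S b') u) s' (Suc (ns + nb' + n2))"
      using has_ty_has_mty.ES h(2) by metis
    then show "has_ty ((env_tl Gs + D) + env_drop (length (u # S)) Gb') (plugS (u # S) b') s' (Suc (ns + n2) + nb')"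
      by (simp add: env_tl_env_drop ac_simps)
  qed (fact split(1))
qed

text \<open>A multi-typing of \<open>W\<langle>t\<rangle>\<close> factors through a multi-typing of \<open>t\<close>: any term of the same
  multi-type that does not mention the variables bound by \<open>W\<close> can be put in its place.\<close>

definition typing_factors :: "wctx \<Rightarrow> trm \<Rightarrow> env \<Rightarrow> ty multiset \<Rightarrow> nat \<Rightarrow> bool" where
  "typing_factors W t G N n \<longleftrightarrow> (\<exists>D M m G0 n0. has_mty D t M m \<and> (N \<noteq> {#} \<longrightarrow> M \<noteq> {#}) \<and>
     n = n0 + m \<and> G = G0 + env_drop (bW W) D \<and>
     (\<forall>D' t' m'. has_mty D' t' M m' \<longrightarrow> fv t' \<inter> {..<bW W} = {} \<longrightarrow>
        has_mty (G0 + env_drop (bW W) D') (plugW W t') N (n0 + m')))"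

lemma typing_factorsI:
  assumes "has_mty D t M m" "M \<noteq> {#}" "n = n0 + m" "G = G0 + env_drop (bW W) D"
    "\<And>D' t' m'. has_mty D' t' M m' \<Longrightarrow> fv t' \<inter> {..<bW W} = {} \<Longrightarrow>
       has_ty (G0 + env_drop (bW W) D') (plugW W t') s (n0 + m')"
  shows "typing_factors W t G {#s#} n"
  using assms unfolding typing_factors_def has_mty_single_iff by blast

lemma typing_factors_mty:
  assumes "\<And>G s n. has_ty G (plugW W t) s n \<Longrightarrow> typing_factors W t G {#s#} n"
  shows "has_mty G (plugW W t) N n \<Longrightarrow> typing_factors W t G N n"
proof (induction N arbitrary: G n)
  case empty
  then show ?case
    unfolding typing_factors_def by (auto simp: has_mty_empty_iff intro!: exI[of _ 0] exI[of _ "{#}"] mempty)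
next
  case (add s N)
  then obtain G1 G2 n1 n2 where h: "has_ty G1 (plugW W t) s n1" "has_mty G2 (plugW W t) N n2"
    "G = G1 + G2" "n = n1 + n2"
    by (auto simp: has_mty_add_mset_iff)
  from assms[OF h(1)] obtain D1 M1 m1 n01 G01 where d1: "has_mty D1 t M1 m1" "M1 \<noteq> {#}" "n1 = n01 + m1"
    "G1 = G01 + env_drop (bW W) D1"
    "\<forall>D' t' m'. has_mty D' t' M1 m' \<longrightarrow> fv t' \<inter> {..<bW W} = {} \<longrightarrow>
       has_ty (G01 + env_drop (bW W) D') (plugW W t') s (n01 + m')"
    unfolding typing_factors_def has_mty_single_iff by auto
  from add.IH[OF h(2)] obtain D2 M2 m2 G02 n02 where d2: "has_mty D2 t M2 m2" "n2 = n02 + m2"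
    "G2 = G02 + env_drop (bW W) D2"
    "\<forall>D' t' m'. has_mty D' t' M2 m' \<longrightarrow> fv t' \<inter> {..<bW W} = {} \<longrightarrow>
       has_mty (G02 + env_drop (bW W) D') (plugW W t') N (n02 + m')"
    unfolding typing_factors_def by blast
  show ?case unfolding typing_factors_def
  proof (intro exI conjI allI impI)
    show "has_mty (D1 + D2) t (M1 + M2) (m1 + m2)" using d1(1) d2(1) by (rule has_mty_union)
    show "M1 + M2 \<noteq> {#}" using d1(2) by simp
    show "n = (n01 + n02) + (m1 + m2)" "G = (G01 + G02) + env_drop (bW W) (D1 + D2)"
      using h d1 d2 by (simp_all add: ac_simps)
  next
    fix D' t' m' assume t': "has_mty D' t' (M1 + M2) m'" "fv t' \<inter> {..<bW W} = {}"
    then obtain D1' D2' m1' m2' where "has_mty D1' t' M1 m1'" "has_mty D2' t' M2 m2'" "D' = D1' + D2'" "m' = m1' + m2'"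
      by (auto simp: has_mty_union_iff)
    with d1(5) d2(4) t'(2) have "has_ty (G01 + env_drop (bW W) D1') (plugW W t') s (n01 + m1')"
      "has_mty (G02 + env_drop (bW W) D2') (plugW W t') N (n02 + m2')"
      by blast+
    from madd[OF this] show "has_mty (G01 + G02 + env_drop (bW W) D') (plugW W t') (add_mset s N) (n01 + n02 + m')"
      using \<open>D' = D1' + D2'\<close> \<open>m' = m1' + m2'\<close> by (simp add: ac_simps)
  qed
qed

lemma typing_factors_WAppL:
  assumes "typing_factors W t G {#Arr M s#} n1" "has_mty D u (add_mset Star M) n2"
  shows "typing_factors (WAppL W u) t (G + D) {#s#} (Suc (n1 + n2))"
proof -
  from assms(1) obtain D0 M0 m n0 G0 where d: "has_mty D0 t M0 m" "M0 \<noteq> {#}"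
    "n1 = n0 + m" "G = G0 + env_drop (bW W) D0"
    "\<forall>D' t' m'. has_mty D' t' M0 m' \<longrightarrow> fv t' \<inter> {..<bW W} = {} \<longrightarrow>
       has_ty (G0 + env_drop (bW W) D') (plugW W t') (Arr M s) (n0 + m')"
    unfolding typing_factors_def has_mty_single_iff by auto
  show ?thesis
  proof (rule typing_factorsI[OF d(1,2)])
    show "Suc (n1 + n2) = Suc (n0 + n2) + m" "G + D = (G0 + D) + env_drop (bW (WAppL W u)) D0"
      using d by (simp_all add: ac_simps)
    fix D' t' m' assume "has_mty D' t' M0 m'" "fv t' \<inter> {..<bW (WAppL W u)} = {}"
    with d(5) have "has_ty (G0 + env_drop (bW W) D') (plugW W t') (Arr M s) (n0 + m')" by simp
    from has_ty_has_mty.App[OF this assms(2)]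
    show "has_ty (G0 + D + env_drop (bW (WAppL W u)) D') (plugW (WAppL W u) t') s (Suc (n0 + n2) + m')"
      by (simp add: ac_simps)
  qed
qed

lemma typing_factors_WAppR:
  assumes "has_ty G u (Arr M s) n1" "typing_factors W t D (add_mset Star M) n2"
  shows "typing_factors (WAppR u W) t (G + D) {#s#} (Suc (n1 + n2))"
proof -
  from assms(2) obtain D0 M0 m n0 G0 where d: "has_mty D0 t M0 m" "M0 \<noteq> {#}"
    "n2 = n0 + m" "D = G0 + env_drop (bW W) D0"
    "\<forall>D' t' m'. has_mty D' t' M0 m' \<longrightarrow> fv t' \<inter> {..<bW W} = {} \<longrightarrow>
       has_mty (G0 + env_drop (bW W) D') (plugW W t') (add_mset Star M) (n0 + m')"
    unfolding typing_factors_def by auto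
  show ?thesis
  proof (rule typing_factorsI[OF d(1,2)])
    show "Suc (n1 + n2) = Suc (n1 + n0) + m" "G + D = (G + G0) + env_drop (bW (WAppR u W)) D0"
      using d by (simp_all add: ac_simps)
    fix D' t' m' assume "has_mty D' t' M0 m'" "fv t' \<inter> {..<bW (WAppR u W)} = {}"
    with d(5) have "has_mty (G0 + env_drop (bW W) D') (plugW W t') (add_mset Star M) (n0 + m')" by simp
    from has_ty_has_mty.App[OF assms(1) this]
    show "has_ty (G + G0 + env_drop (bW (WAppR u W)) D') (plugW (WAppR u W) t') s (Suc (n1 + n0) + m')"
      by (simp add: ac_simps)
  qed
qed

lemma typing_factors_WESR:
  assumes "has_ty G u s n1" "typing_factors W t D (add_mset Star (G 0)) n2"
  shows "typing_factors (WESR u W) t (env_tl G + D) {#s#} (Suc (n1 + n2))"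
proof -
  from assms(2) obtain D0 M0 m n0 G0 where d: "has_mty D0 t M0 m" "M0 \<noteq> {#}"
    "n2 = n0 + m" "D = G0 + env_drop (bW W) D0"
    "\<forall>D' t' m'. has_mty D' t' M0 m' \<longrightarrow> fv t' \<inter> {..<bW W} = {} \<longrightarrow>
       has_mty (G0 + env_drop (bW W) D') (plugW W t') (add_mset Star (G 0)) (n0 + m')"
    unfolding typing_factors_def by auto
  show ?thesis
  proof (rule typing_factorsI[OF d(1,2)])
    show "Suc (n1 + n2) = Suc (n1 + n0) + m" "env_tl G + D = (env_tl G + G0) + env_drop (bW (WESR u W)) D0"
      using d by (simp_all add: ac_simps)
    fix D' t' m' assume "has_mty D' t' M0 m'" "fv t' \<inter> {..<bW (WESR u W)} = {}"
    with d(5) have "has_mty (G0 + env_drop (bW W) D') (plugW W t') (add_mset Star (G 0)) (n0 + m')" by simp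
    from has_ty_has_mty.ES[OF assms(1) this]
    show "has_ty (env_tl G + G0 + env_drop (bW (WESR u W)) D') (plugW (WESR u W) t') s (Suc (n1 + n0) + m')"
      by (simp add: ac_simps env_drop_def)
  qed
qed

lemma typing_factors_WESL:
  assumes "bW W \<notin> fv t" "typing_factors W t G {#s#} n1" "has_mty D u (add_mset Star (G 0)) n2"
  shows "typing_factors (WESL W u) t (env_tl G + D) {#s#} (Suc (n1 + n2))"
proof -
  from assms(2) obtain D0 M0 m n0 G0 where d: "has_mty D0 t M0 m" "M0 \<noteq> {#}"
    "n1 = n0 + m" "G = G0 + env_drop (bW W) D0"
    "\<forall>D' t' m'. has_mty D' t' M0 m' \<longrightarrow> fv t' \<inter> {..<bW W} = {} \<longrightarrow>
       has_ty (G0 + env_drop (bW W) D') (plugW W t') s (n0 + m')"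
    unfolding typing_factors_def has_mty_single_iff by auto
  have "D0 (bW W) = {#}"
    using has_mty_env_notin_fv[OF d(1) assms(1)] .
  show ?thesis
  proof (rule typing_factorsI[OF d(1,2)])
    show "Suc (n1 + n2) = Suc (n0 + n2) + m" "env_tl G + D = (env_tl G0 + D) + env_drop (bW (WESL W u)) D0"
      using d by (simp_all add: env_tl_env_drop ac_simps)
    fix D' t' m' assume t': "has_mty D' t' M0 m'" "fv t' \<inter> {..<bW (WESL W u)} = {}"
    then have "bW W \<notin> fv t'" "fv t' \<inter> {..<bW W} = {}"
      by (auto simp: lessThan_Suc)
    with d(5) t'(1) have hole: "has_ty (G0 + env_drop (bW W) D') (plugW W t') s (n0 + m')" by blast
    have "(G0 + env_drop (bW W) D') 0 = G 0"
      using d(4) \<open>D0 (bW W) = {#}\<close> has_mty_env_notin_fv[OF t'(1) \<open>bW W \<notin> fv t'\<close>] by simp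
    with has_ty_has_mty.ES[OF hole] assms(3)
    have "has_ty (env_tl (G0 + env_drop (bW W) D') + D) (ES (plugW W t') u) s (Suc (n0 + m' + n2))"
      by simp
    then show "has_ty (env_tl G0 + D + env_drop (bW (WESL W u)) D') (plugW (WESL W u) t') s (Suc (n0 + n2) + m')"
      by (simp add: env_tl_env_drop ac_simps)
  qed
qed

lemma has_ty_plugW_factors:
  "fv t \<inter> {..<bW W} = {} \<Longrightarrow> has_ty G (plugW W t) s n \<Longrightarrow> typing_factors W t G {#s#} n"
proof (induction W arbitrary: G s n)
  case WHole
  show ?case
    unfolding typing_factors_def
    by (intro exI[of _ G] exI[of _ "{#s#}"] exI[of _ n] exI[of _ 0] exI[of _ 0])
      (use WHole in \<open>auto simp: has_mty_single_iff\<close>)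
next
  case (WAppL W u)
  then obtain G1 M n1 D n2 where h: "has_ty G1 (plugW W t) (Arr M s) n1"
    "has_mty D u (add_mset Star M) n2" "G = G1 + D" "n = Suc (n1 + n2)"
    by (auto simp: has_ty_App_iff)
  from WAppL.IH[OF _ h(1)] WAppL.prems(1) have "typing_factors W t G1 {#Arr M s#} n1"
    by simp
  then have "typing_factors (WAppL W u) t (G1 + D) {#s#} (Suc (n1 + n2))"
    using h(2) by (rule typing_factors_WAppL)
  then show ?case by (simp only: h(3,4))
next
  case (WAppR u W)
  then obtain G1 M n1 D n2 where h: "has_ty G1 u (Arr M s) n1"
    "has_mty D (plugW W t) (add_mset Star M) n2" "G = G1 + D" "n = Suc (n1 + n2)"
    by (auto simp: has_ty_App_iff)
  from typing_factors_mty[OF WAppR.IH h(2)] WAppR.prems(1) have "typing_factors W t D (add_mset Star M) n2"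
    by simp
  with h(1) have "typing_factors (WAppR u W) t (G1 + D) {#s#} (Suc (n1 + n2))"
    by (rule typing_factors_WAppR)
  then show ?case by (simp only: h(3,4))
next
  case (WESR u W)
  then obtain Gu n1 D n2 where h: "has_ty Gu u s n1"
    "has_mty D (plugW W t) (add_mset Star (Gu 0)) n2" "G = env_tl Gu + D" "n = Suc (n1 + n2)"
    by (auto simp: has_ty_ES_iff)
  from typing_factors_mty[OF WESR.IH h(2)] WESR.prems(1) have "typing_factors W t D (add_mset Star (Gu 0)) n2"
    by simp
  with h(1) have "typing_factors (WESR u W) t (env_tl Gu + D) {#s#} (Suc (n1 + n2))"
    by (rule typing_factors_WESR)
  then show ?case by (simp only: h(3,4))
next
  case (WESL W u)
  then obtain G1 n1 D n2 where h: "has_ty G1 (plugW W t) s n1"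
    "has_mty D u (add_mset Star (G1 0)) n2" "G = env_tl G1 + D" "n = Suc (n1 + n2)"
    by (auto simp: has_ty_ES_iff)
  have "bW W \<notin> fv t" "fv t \<inter> {..<bW W} = {}"
    using WESL.prems(1) by (auto simp: lessThan_Suc)
  with WESL.IH h(1) have "bW W \<notin> fv t" "typing_factors W t G1 {#s#} n1"
    by simp_all
  then have "typing_factors (WESL W u) t (env_tl G1 + D) {#s#} (Suc (n1 + n2))"
    using h(2) by (rule typing_factors_WESL)
  then show ?case by (simp only: h(3,4))
qed

section \<open>Subject reduction and expansion\<close>

definition transfers_typing :: "(nat \<Rightarrow> nat \<Rightarrow> bool) \<Rightarrow> trm \<Rightarrow> trm \<Rightarrow> bool" where
  "transfers_typing R t t' \<longleftrightarrow> (\<forall>G s n. has_ty G t s n \<longrightarrow> (\<exists>n'. R n n' \<and> has_ty G t' s n'))"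

text \<open>With \<open>R = (>)\<close> a size decrease propagates through weak contexts. It cannot propagate under
  an abstraction, which has type \<open>Star\<close> whatever its body, so for arbitrary contexts only the
  trivial relation is used.\<close>

locale size_relation =
  fixes R :: "nat \<Rightarrow> nat \<Rightarrow> bool"
  assumes R_add: "R a b \<Longrightarrow> R c d \<Longrightarrow> R (a + c) (b + d)"
    and R_shift: "R a b \<Longrightarrow> R (a + c) (b + c)"
begin

lemma transfers_typing_mty:
  assumes "transfers_typing R t t'" "has_mty G t M n" "M \<noteq> {#}"
  shows "\<exists>n'. R n n' \<and> has_mty G t' M n'"
  using assms(2,3)
proof (induction M arbitrary: G n)
  case (add s M)
  then obtain G1 G2 n1 n2 where h: "has_ty G1 t s n1" "has_mty G2 t M n2" "G = G1 + G2" "n = n1 + n2"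
    by (auto simp: has_mty_add_mset_iff)
  with assms(1) obtain n1' where n1': "R n1 n1'" "has_ty G1 t' s n1'"
    unfolding transfers_typing_def by blast
  show ?case
  proof (cases "M = {#}")
    case True
    with h n1' show ?thesis by (auto simp: has_mty_add_mset_iff has_mty_empty_iff)
  next
    case False
    with add.IH h(2) obtain n2' where "R n2 n2'" "has_mty G2 t' M n2'" by blast
    with h n1' show ?thesis by (metis R_add madd)
  qed
qed simp

lemma R_Suc_add: "R a b \<Longrightarrow> R (Suc (a + c)) (Suc (b + c))"
  and R_Suc_add': "R a b \<Longrightarrow> R (Suc (c + a)) (Suc (c + b))"
  using R_shift[of a b "Suc c"] by (simp_all add: add.commute)

lemma transfers_typing_AppL: "transfers_typing R t t' \<Longrightarrow> transfers_typing R (App t u) (App t' u)"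
  unfolding transfers_typing_def has_ty_App_iff by (metis R_Suc_add)

lemma transfers_typing_AppR: "transfers_typing R t t' \<Longrightarrow> transfers_typing R (App u t) (App u t')"
  using transfers_typing_mty unfolding transfers_typing_def has_ty_App_iff
  by (metis R_Suc_add' add_mset_not_empty)

lemma transfers_typing_ESL: "transfers_typing R t t' \<Longrightarrow> transfers_typing R (ES t u) (ES t' u)"
  unfolding transfers_typing_def has_ty_ES_iff by (metis R_Suc_add)

lemma transfers_typing_ESR: "transfers_typing R t t' \<Longrightarrow> transfers_typing R (ES u t) (ES u t')"
  using transfers_typing_mty unfolding transfers_typing_def has_ty_ES_iff
  by (metis R_Suc_add' add_mset_not_empty)

lemma transfers_typing_plugW: "transfers_typing R t t' \<Longrightarrow> transfers_typing R (plugW W t) (plugW W t')"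
  by (induction W)
    (auto intro: transfers_typing_AppL transfers_typing_AppR transfers_typing_ESL transfers_typing_ESR)

end

interpretation strict: size_relation "(>)"
  by unfold_locales auto

interpretation any: size_relation "\<lambda>_ _. True"
  by unfold_locales auto

lemma transfers_typing_Lam:
  "transfers_typing (\<lambda>_ _. True) t t' \<Longrightarrow> transfers_typing (\<lambda>_ _. True) (Lam t) (Lam t')"
  unfolding transfers_typing_def has_ty_Lam_iff by blast

lemma transfers_typing_plugC:
  "transfers_typing (\<lambda>_ _. True) t t' \<Longrightarrow> transfers_typing (\<lambda>_ _. True) (plugC C t) (plugC C t')"
  by (induction C) (auto intro: transfers_typing_Lam any.transfers_typing_AppL any.transfers_typing_AppR
      any.transfers_typing_ESL any.transfers_typing_ESR)

lemma m_subject_reduction: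
  "transfers_typing (>) (App (plugS S (Lam t)) u) (plugS S (ES t (lift (length S) u)))"
  unfolding transfers_typing_def
proof (intro allI impI)
  fix G s n assume "has_ty G (App (plugS S (Lam t)) u) s n"
  then obtain G1 M n1 D n2 where h: "has_ty G1 (plugS S (Lam t)) (Arr M s) n1"
    "has_mty D u (add_mset Star M) n2" "G = G1 + D" "n = Suc (n1 + n2)"
    by (auto simp: has_ty_App_iff)
  let ?k = "length S"
  from has_ty_plugS_split[OF h(1)] obtain Gb nb Gs ns where sp: "has_ty Gb (Lam t) (Arr M s) nb"
    "G1 = Gs + env_drop ?k Gb" "n1 = ns + nb"
    "\<forall>b' Gb' s' nb'. has_ty Gb' b' s' nb' \<longrightarrow> (\<forall>i<?k. Gb' i = Gb i) \<longrightarrow>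
      has_ty (Gs + env_drop ?k Gb') (plugS S b') s' (ns + nb')"
    by blast
  from sp(1) obtain Gt nt where t: "has_ty Gt t s nt" "Gb = env_tl Gt" "M = Gt 0" "nb = Suc nt"
    by (auto simp: has_ty_Lam_iff)
  have "has_ty (env_tl Gt + env_ren (\<lambda>x. x + ?k) D) (ES t (lift ?k u)) s (Suc (nt + n2))"
    using has_ty_has_mty.ES[OF t(1)] has_mty_lift[OF h(2)] t(3) by simp
  moreover have "\<forall>i<?k. (env_tl Gt + env_ren (\<lambda>x. x + ?k) D) i = Gb i"
    using t(2) by (simp add: env_ren_shift_below)
  ultimately have "has_ty (Gs + env_drop ?k (env_tl Gt + env_ren (\<lambda>x. x + ?k) D))
      (plugS S (ES t (lift ?k u))) s (ns + Suc (nt + n2))"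
    using sp(4) by blast
  moreover have "Gs + env_drop ?k (env_tl Gt + env_ren (\<lambda>x. x + ?k) D) = G"
    using h(3) sp(2) t(2) by (simp add: env_drop_env_ren_shift ac_simps)
  ultimately show "\<exists>n'. n > n' \<and> has_ty G (plugS S (ES t (lift ?k u))) s n'"
    using h(4) sp(3) t(4) by (intro exI[of _ "ns + Suc (nt + n2)"]) simp
qed

lemma m_subject_expansion:
  "transfers_typing (\<lambda>_ _. True) (plugS S (ES t (lift (length S) u))) (App (plugS S (Lam t)) u)"
  unfolding transfers_typing_def
proof (intro allI impI)
  let ?k = "length S"
  fix G s n assume "has_ty G (plugS S (ES t (lift ?k u))) s n"
  from has_ty_plugS_split[OF this] obtain Gb nb Gs ns where sp: "has_ty Gb (ES t (lift ?k u)) s nb"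
    "G = Gs + env_drop ?k Gb"
    "\<forall>b' Gb' s' nb'. has_ty Gb' b' s' nb' \<longrightarrow> (\<forall>i<?k. Gb' i = Gb i) \<longrightarrow>
      has_ty (Gs + env_drop ?k Gb') (plugS S b') s' (ns + nb')"
    by blast
  from sp(1) obtain Gt n1 D' n2 where e: "has_ty Gt t s n1" "has_mty D' (lift ?k u) (add_mset Star (Gt 0)) n2"
    "Gb = env_tl Gt + D'"
    by (auto simp: has_ty_ES_iff)
  from has_mty_unlift[OF e(2)] obtain D where d: "has_mty D u (add_mset Star (Gt 0)) n2"
    "D' = env_ren (\<lambda>x. x + ?k) D"
    by blast
  have "\<forall>i<?k. env_tl Gt i = Gb i"
    using e(3) d(2) by (simp add: env_ren_shift_below)
  with sp(3) has_ty_has_mty.Lam[OF e(1)]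
  have "has_ty (Gs + env_drop ?k (env_tl Gt)) (plugS S (Lam t)) (Arr (Gt 0) s) (ns + Suc n1)"
    by blast
  from has_ty_has_mty.App[OF this d(1)]
  have "has_ty (Gs + env_drop ?k (env_tl Gt) + D) (App (plugS S (Lam t)) u) s (Suc (ns + Suc n1 + n2))" .
  moreover have "Gs + env_drop ?k (env_tl Gt) + D = G"
    using sp(2) e(3) d(2) by (simp add: env_drop_env_ren_shift ac_simps)
  ultimately show "\<exists>n'. True \<and> has_ty G (App (plugS S (Lam t)) u) s n'" by auto
qed

lemma e_subject_reduction:
  "transfers_typing (>) (ES (plugW W (Var (bW W))) u) (ES (plugW W (lift (Suc (bW W)) u)) u)"
  unfolding transfers_typing_def
proof (intro allI impI)
  let ?k = "bW W"
  let ?f = "\<lambda>x. x + Suc ?k"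
  fix G s n assume "has_ty G (ES (plugW W (Var ?k)) u) s n"
  then obtain Gb n1 Du n2 where h: "has_ty Gb (plugW W (Var ?k)) s n1"
    "has_mty Du u (add_mset Star (Gb 0)) n2" "G = env_tl Gb + Du" "n = Suc (n1 + n2)"
    by (auto simp: has_ty_ES_iff)
  from has_ty_plugW_factors[OF _ h(1)] obtain D M m n0 G0 where d: "has_mty D (Var ?k) M m" "M \<noteq> {#}"
    "n1 = n0 + m" "Gb = G0 + env_drop ?k D"
    "\<forall>D' t' m'. has_mty D' t' M m' \<longrightarrow> fv t' \<inter> {..<?k} = {} \<longrightarrow>
       has_ty (G0 + env_drop ?k D') (plugW W t') s (n0 + m')"
    unfolding typing_factors_def has_mty_single_iff by auto
  from d(1) have D: "D = single_env ?k M" "m = size M"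
    by (auto simp: has_mty_Var_iff)
  with h(2) d(4) have "has_mty Du u (add_mset Star (G0 0) + M) n2"
    by (simp add: single_env_def)
  from has_mty_union_iff[THEN iffD1, OF this] obtain Da Db na nb where
    u: "has_mty Da u (add_mset Star (G0 0)) na" "has_mty Db u M nb" "Du = Da + Db" "n2 = na + nb"
    by blast
  have "has_ty (G0 + env_drop ?k (env_ren ?f Db)) (plugW W (lift (Suc ?k) u)) s (n0 + nb)"
    using d(5) has_mty_lift[OF u(2), of "Suc ?k"] fv_lift_Suc_disjoint[of ?k u] by blast
  moreover have "(G0 + env_drop ?k (env_ren ?f Db)) 0 = G0 0"
    using env_ren_shift_below[of ?k "Suc ?k" Db] by simp
  ultimately have "has_ty (env_tl (G0 + env_drop ?k (env_ren ?f Db)) + Da) (ES (plugW W (lift (Suc ?k) u)) u) s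
      (Suc (n0 + nb + na))"
    using has_ty_has_mty.ES u(1) by metis
  moreover have "env_tl (G0 + env_drop ?k (env_ren ?f Db)) + Da = G"
    using h(3) d(4) D u(3) env_drop_env_ren_shift[of "Suc ?k" Db]
    by (simp add: env_tl_env_drop env_drop_single_env ac_simps)
  \<comment> \<open>the \<open>size M > 0\<close> axioms typing the occurrence of the variable are gone\<close>
  moreover have "Suc (n0 + nb + na) < n"
    using h(4) d(2,3) D u(4) by (simp add: nonempty_has_size)
  ultimately show "\<exists>n'. n > n' \<and> has_ty G (ES (plugW W (lift (Suc ?k) u)) u) s n'"
    by blast
qed

lemma e_subject_expansion:
  "transfers_typing (\<lambda>_ _. True) (ES (plugW W (lift (Suc (bW W)) u)) u) (ES (plugW W (Var (bW W))) u)"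
  unfolding transfers_typing_def
proof (intro allI impI)
  let ?k = "bW W"
  let ?f = "\<lambda>x. x + Suc ?k"
  fix G s n assume "has_ty G (ES (plugW W (lift (Suc ?k) u)) u) s n"
  then obtain Gb n1 Du n2 where h: "has_ty Gb (plugW W (lift (Suc ?k) u)) s n1"
    "has_mty Du u (add_mset Star (Gb 0)) n2" "G = env_tl Gb + Du"
    by (auto simp: has_ty_ES_iff)
  from has_ty_plugW_factors[OF fv_lift_Suc_disjoint h(1)] obtain D M m n0 G0 where
    d: "has_mty D (lift (Suc ?k) u) M m" "Gb = G0 + env_drop ?k D"
    "\<forall>D' t' m'. has_mty D' t' M m' \<longrightarrow> fv t' \<inter> {..<?k} = {} \<longrightarrow>
       has_ty (G0 + env_drop ?k D') (plugW W t') s (n0 + m')"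
    unfolding typing_factors_def has_mty_single_iff by auto
  from has_mty_unlift[OF d(1)] obtain Du' where u: "has_mty Du' u M m" "D = env_ren ?f Du'"
    by blast
  have "has_ty (G0 + env_drop ?k (single_env ?k M)) (plugW W (Var ?k)) s (n0 + size M)"
    using d(3) by (simp add: has_mty_Var_iff)
  moreover have "Gb 0 = G0 0"
    using d(2) u(2) env_ren_shift_below[of ?k "Suc ?k" Du'] by simp
  with h(2) u(1) have "has_mty (Du + Du') u (add_mset Star ((G0 + env_drop ?k (single_env ?k M)) 0)) (n2 + m)"
    using has_mty_union[of Du u "add_mset Star (G0 0)" n2 Du' M m] by (simp add: single_env_def)
  ultimately have "has_ty (env_tl (G0 + env_drop ?k (single_env ?k M)) + (Du + Du')) (ES (plugW W (Var ?k)) u) s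
      (Suc (n0 + size M + (n2 + m)))"
    by (rule has_ty_has_mty.ES)
  moreover have "env_tl (G0 + env_drop ?k (single_env ?k M)) + (Du + Du') = G"
    using h(3) d(2) u(2) env_drop_env_ren_shift[of "Suc ?k" Du']
    by (simp add: env_tl_env_drop env_drop_single_env ac_simps)
  ultimately show "\<exists>n'. True \<and> has_ty G (ES (plugW W (Var ?k)) u) s n'"
    by blast
qed

lemma gcv_subject_reduction:
  assumes "0 \<notin> fv t"
  shows "transfers_typing (>) (ES t (plugS S (Lam b))) (plugS S (ren (\<lambda>n. n - 1 + length S) t))"
  unfolding transfers_typing_def
proof (intro allI impI)
  let ?k = "length S"
  let ?t0 = "ren (\<lambda>n. n - 1) t"
  fix G s n assume "has_ty G (ES t (plugS S (Lam b))) s n"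
  then obtain Gt n1 D n2 where h: "has_ty Gt t s n1" "has_mty D (plugS S (Lam b)) (add_mset Star (Gt 0)) n2"
    "G = env_tl Gt + D" "n = Suc (n1 + n2)"
    by (auto simp: has_ty_ES_iff)
  from h(2) has_ty_env_notin_fv[OF h(1) assms] have "has_ty D (plugS S (Lam b)) Star n2"
    by (simp add: has_mty_single_iff)
  from has_ty_plugS_split[OF this] obtain Gb nb Gs ns where sp: "has_ty Gb (Lam b) Star nb"
    "D = Gs + env_drop ?k Gb" "n2 = ns + nb"
    "\<forall>b' Gb' s' nb'. has_ty Gb' b' s' nb' \<longrightarrow> (\<forall>i<?k. Gb' i = Gb i) \<longrightarrow>
      has_ty (Gs + env_drop ?k Gb') (plugS S b') s' (ns + nb')"
    by blast
  from sp(1) have Gb: "Gb = 0" "nb = Suc 0"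
    by (auto simp: has_ty_Lam_iff)
  from h(1) ren_Suc_ren_pred[OF assms] have "has_ty Gt (ren Suc ?t0) s n1"
    by simp
  from has_ty_unren[OF inj_Suc this] obtain G0 where g: "has_ty G0 ?t0 s n1" "Gt = env_ren Suc G0"
    by blast
  from sp(4) has_ty_lift[OF g(1), of ?k] Gb(1)
  have "has_ty (Gs + env_drop ?k (env_ren (\<lambda>x. x + ?k) G0)) (plugS S (lift ?k ?t0)) s (ns + n1)"
    by (simp add: env_ren_shift_below)
  moreover have "Gs + env_drop ?k (env_ren (\<lambda>x. x + ?k) G0) = G"
    using h(3) sp(2) Gb(1) g(2) by (simp add: env_drop_env_ren_shift env_tl_env_ren_Suc ac_simps)
  ultimately show "\<exists>n'. n > n' \<and> has_ty G (plugS S (ren (\<lambda>n. n - 1 + ?k) t)) s n'"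
    using h(4) sp(3) Gb(2) lift_ren_pred[of ?k t] by (intro exI[of _ "ns + n1"]) simp
qed

lemma gcv_subject_expansion:
  assumes "0 \<notin> fv t"
  shows "transfers_typing (\<lambda>_ _. True) (plugS S (ren (\<lambda>n. n - 1 + length S) t)) (ES t (plugS S (Lam b)))"
  unfolding transfers_typing_def
proof (intro allI impI)
  let ?k = "length S"
  let ?t0 = "ren (\<lambda>n. n - 1) t"
  fix G s n assume "has_ty G (plugS S (ren (\<lambda>n. n - 1 + ?k) t)) s n"
  then have "has_ty G (plugS S (lift ?k ?t0)) s n"
    using lift_ren_pred[of ?k t] by simp
  from has_ty_plugS_split[OF this] obtain Gb nb Gs ns where sp: "has_ty Gb (lift ?k ?t0) s nb"
    "G = Gs + env_drop ?k Gb"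
    "\<forall>b' Gb' s' nb'. has_ty Gb' b' s' nb' \<longrightarrow> (\<forall>i<?k. Gb' i = Gb i) \<longrightarrow>
      has_ty (Gs + env_drop ?k Gb') (plugS S b') s' (ns + nb')"
    by blast
  from has_ty_unlift[OF sp(1)] obtain G0 where g: "has_ty G0 ?t0 s nb" "Gb = env_ren (\<lambda>x. x + ?k) G0"
    by blast
  have t: "has_ty (env_ren Suc G0) t s nb"
    using has_ty_ren[OF g(1) inj_Suc] ren_Suc_ren_pred[OF assms] by simp
  have "\<forall>i<?k. (0::env) i = Gb i"
    using g(2) by (simp add: env_ren_shift_below)
  with sp(3) has_ty_has_mty.Star[of b]
  have "has_ty (Gs + env_drop ?k 0) (plugS S (Lam b)) Star (ns + Suc 0)"
    by blast
  then have "has_mty Gs (plugS S (Lam b)) (add_mset Star (env_ren Suc G0 0)) (ns + Suc 0)"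
    by (simp add: env_ren_Suc_0 has_mty_single_iff)
  from has_ty_has_mty.ES[OF t this]
  have "has_ty (env_tl (env_ren Suc G0) + Gs) (ES t (plugS S (Lam b))) s (Suc (nb + (ns + Suc 0)))" .
  moreover have "env_tl (env_ren Suc G0) + Gs = G"
    using sp(2) g(2) by (simp add: env_tl_env_ren_Suc env_drop_env_ren_shift ac_simps)
  ultimately show "\<exists>n'. True \<and> has_ty G (ES t (plugS S (Lam b))) s n'"
    by blast
qed

lemma root_subject_reduction: "root t u \<Longrightarrow> transfers_typing (>) t u"
  and root_subject_expansion: "root t u \<Longrightarrow> transfers_typing (\<lambda>_ _. True) u t"
  by (induction rule: root.induct)
    (blast intro: m_subject_reduction m_subject_expansion e_subject_reduction e_subject_expansion
      gcv_subject_reduction gcv_subject_expansion)+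

lemma wstep_subject_reduction: "wstep t u \<Longrightarrow> transfers_typing (>) t u"
  and wstep_subject_expansion: "wstep t u \<Longrightarrow> transfers_typing (\<lambda>_ _. True) u t"
  unfolding wstep_def
  by (auto intro: strict.transfers_typing_plugW any.transfers_typing_plugW
      root_subject_reduction root_subject_expansion)

section \<open>Typability and weak normalisation\<close>

fun fvW :: "wctx \<Rightarrow> nat set" where
  "fvW WHole = {}"
| "fvW (WAppL W u) = fvW W \<union> fv u"
| "fvW (WAppR u W) = fv u \<union> fvW W"
| "fvW (WESR u W) = {n. Suc n \<in> fv u} \<union> fvW W"
| "fvW (WESL W u) = {n. Suc n \<in> fvW W} \<union> fv u"

lemma fv_plugW: "fv (plugW W t) = fvW W \<union> {n. n + bW W \<in> fv t}"
  by (induction W) auto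

fun wctx_of_sctx :: "trm list \<Rightarrow> wctx" where
  "wctx_of_sctx [] = WHole"
| "wctx_of_sctx (u # S) = WESL (wctx_of_sctx S) u"

lemma plugS_eq_plugW: "plugS S t = plugW (wctx_of_sctx S) t"
  and bW_wctx_of_sctx [simp]: "bW (wctx_of_sctx S) = length S"
  by (induction S) auto

lemma fv_plugS: "fv (plugS S t) = fvW (wctx_of_sctx S) \<union> {n. n + length S \<in> fv t}"
  by (simp add: plugS_eq_plugW fv_plugW)

lemma root_fv: "root t u \<Longrightarrow> fv u \<subseteq> fv t"
proof (induction rule: root.induct)
  case (rgcv t S s)
  have "{n. n + length S \<in> fv (ren (\<lambda>n. n - 1 + length S) t)} \<subseteq> {n. Suc n \<in> fv t}"
  proof
    fix n assume "n \<in> {n. n + length S \<in> fv (ren (\<lambda>n. n - 1 + length S) t)}"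
    then obtain y where "y \<in> fv t" "n + length S = y - 1 + length S"
      by (auto simp: fv_ren)
    with rgcv show "n \<in> {n. Suc n \<in> fv t}"
      by (cases y) auto
  qed
  then show ?case by (auto simp: fv_plugS)
qed (auto simp: fv_plugS fv_plugW fv_lift)

lemma wstep_fv: "wstep t u \<Longrightarrow> fv u \<subseteq> fv t"
  unfolding wstep_def by (auto simp: fv_plugW dest!: root_fv)

lemma wsteps_fv: "wstep\<^sup>*\<^sup>* t u \<Longrightarrow> fv u \<subseteq> fv t"
  by (induction rule: rtranclp_induct) (auto dest: wstep_fv)

fun weak_fv :: "trm \<Rightarrow> nat set" where
  "weak_fv (Var n) = {n}"
| "weak_fv (Lam t) = {}"
| "weak_fv (App t u) = weak_fv t \<union> weak_fv u"
| "weak_fv (ES t u) = {n. Suc n \<in> weak_fv t} \<union> weak_fv u"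

lemma weak_fv_subset_fv: "weak_fv t \<subseteq> fv t"
  by (induction t) auto

lemma weak_fv_plugW: "k \<in> weak_fv t \<Longrightarrow> \<exists>W. t = plugW W (Var (k + bW W))"
proof (induction t arbitrary: k)
  case (Var n)
  then show ?case by (auto intro: exI[of _ WHole])
next
  case (App t u)
  then consider "k \<in> weak_fv t" | "k \<in> weak_fv u" by auto
  then show ?case
  proof cases
    case 1
    with App.IH(1) obtain W where "t = plugW W (Var (k + bW W))" by blast
    then show ?thesis by (intro exI[of _ "WAppL W u"]) simp
  next
    case 2
    with App.IH(2) obtain W where "u = plugW W (Var (k + bW W))" by blast
    then show ?thesis by (intro exI[of _ "WAppR t W"]) simp
  qed
next
  case (ES t u)
  then consider "Suc k \<in> weak_fv t" | "k \<in> weak_fv u" by auto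
  then show ?case
  proof cases
    case 1
    with ES.IH(1) obtain W where "t = plugW W (Var (Suc k + bW W))" by blast
    then show ?thesis by (intro exI[of _ "WESL W u"]) simp
  next
    case 2
    with ES.IH(2) obtain W where "u = plugW W (Var (k + bW W))" by blast
    then show ?thesis by (intro exI[of _ "WESR t W"]) simp
  qed
qed simp

fun wctx_comp :: "wctx \<Rightarrow> wctx \<Rightarrow> wctx" where
  "wctx_comp WHole V = V"
| "wctx_comp (WAppL W u) V = WAppL (wctx_comp W V) u"
| "wctx_comp (WAppR u W) V = WAppR u (wctx_comp W V)"
| "wctx_comp (WESR u W) V = WESR u (wctx_comp W V)"
| "wctx_comp (WESL W u) V = WESL (wctx_comp W V) u"

lemma plugW_wctx_comp: "plugW (wctx_comp W V) t = plugW W (plugW V t)"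
  by (induction W) auto

lemma wstep_plugW: "wstep t t' \<Longrightarrow> wstep (plugW W t) (plugW W t')"
  unfolding wstep_def by (auto simp flip: plugW_wctx_comp) blast

definition wnf :: "trm \<Rightarrow> bool" where
  "wnf t \<longleftrightarrow> \<not> (\<exists>u. wstep t u)"

lemma wnf_plugW: "wnf (plugW W t) \<Longrightarrow> wnf t"
  unfolding wnf_def by (auto dest: wstep_plugW)

lemma root_not_wnf: "root t u \<Longrightarrow> \<not> wnf t"
  unfolding wnf_def wstep_def by (auto intro!: exI[of _ WHole])

lemma weak_closed_wnf_answer:
  "wnf t \<Longrightarrow> weak_fv t = {} \<Longrightarrow> (\<exists>S b. t = plugS S (Lam b)) \<and> (\<exists>n. has_ty 0 t Star n)"
proof (induction t)
  case (Lam b)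
  have "Lam b = plugS [] (Lam b)" by simp
  then show ?case using has_ty_has_mty.Star by blast
next
  case (App t u)
  with wnf_plugW[of "WAppL WHole u" t] obtain S b where "t = plugS S (Lam b)"
    by auto
  with root.rm[of S b u] App.prems(1) show ?case
    by (auto dest: root_not_wnf)
next
  case (ES t u)
  have wnf: "wnf t" "wnf u"
    using ES.prems(1) wnf_plugW[of "WESL WHole u" t] wnf_plugW[of "WESR t WHole" u] by auto
  have "0 \<notin> weak_fv t"
  proof
    assume "0 \<in> weak_fv t"
    then obtain W where "t = plugW W (Var (bW W))"
      using weak_fv_plugW[of 0 t] by auto
    with root.re[of W u] ES.prems(1) show False
      by (auto dest: root_not_wnf)
  qed
  with ES.prems(2) have "weak_fv t = {}" "weak_fv u = {}"
    by auto (metis not0_implies_Suc)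
  with ES.IH wnf obtain S b nt nu where "t = plugS S (Lam b)" "has_ty 0 t Star nt" "has_ty 0 u Star nu"
    by blast
  moreover from this have "has_ty 0 (ES t u) Star (Suc (nt + nu))"
    using has_ty_has_mty.ES[of 0 t Star nt 0 u nu] by (simp add: has_mty_single_iff)
  ultimately show ?case
    by (metis plugS.simps(2))
qed simp_all

definition typable :: "trm \<Rightarrow> bool" where
  "typable t \<longleftrightarrow> (\<exists>G s n. has_ty G t s n)"

lemma transfers_typing_typable: "transfers_typing R t t' \<Longrightarrow> typable t \<Longrightarrow> typable t'"
  unfolding transfers_typing_def typable_def by blast

lemma has_ty_wnorm: "has_ty G t s n \<Longrightarrow> wnorm t"
proof (induction n arbitrary: t rule: less_induct)
  case (less n)
  show ?case
  proof (cases "\<exists>u. wstep t u")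
    case True
    then obtain u where u: "wstep t u" by blast
    with wstep_subject_reduction less.prems obtain n' where "n' < n" "has_ty G u s n'"
      unfolding transfers_typing_def by blast
    with less.IH have "wnorm u" by blast
    with u show ?thesis
      unfolding wnorm_def by (meson converse_rtranclp_into_rtranclp)
  qed (auto simp: wnorm_def)
qed

lemma wsteps_typable: "wstep\<^sup>*\<^sup>* t u \<Longrightarrow> typable u \<Longrightarrow> typable t"
  by (induction rule: converse_rtranclp_induct)
    (auto intro: transfers_typing_typable wstep_subject_expansion)

lemma closed_wnorm_iff_typable: "closed t \<Longrightarrow> wnorm t \<longleftrightarrow> typable t"
proof
  assume "closed t" "wnorm t"
  then obtain v where v: "wstep\<^sup>*\<^sup>* t v" "wnf v"
    unfolding wnorm_def wnf_def by blast
  with \<open>closed t\<close> wsteps_fv[OF v(1)] weak_fv_subset_fv[of v] have "weak_fv v = {}"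
    unfolding closed_def by blast
  with v weak_closed_wnf_answer[of v] show "typable t"
    using wsteps_typable typable_def by blast
qed (auto simp: typable_def intro: has_ty_wnorm)

fun ctx_comp :: "ctx \<Rightarrow> ctx \<Rightarrow> ctx" where
  "ctx_comp Hole D = D"
| "ctx_comp (CLam C) D = CLam (ctx_comp C D)"
| "ctx_comp (CAppL C u) D = CAppL (ctx_comp C D) u"
| "ctx_comp (CAppR u C) D = CAppR u (ctx_comp C D)"
| "ctx_comp (CESL C u) D = CESL (ctx_comp C D) u"
| "ctx_comp (CESR u C) D = CESR u (ctx_comp C D)"

lemma plugC_ctx_comp: "plugC (ctx_comp C D) t = plugC C (plugC D t)"
  by (induction C) auto

theorem proposition7p8:
  shows "(\<forall>t u. wstep t u \<longrightarrow> ctxeq t u)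
       \<and> (\<forall>t u C. ctxeq t u \<longrightarrow> ctxeq (plugC C t) (plugC C u))"
proof (intro conjI allI impI)
  fix t u assume "wstep t u"
  then have "transfers_typing (\<lambda>_ _. True) t u" "transfers_typing (\<lambda>_ _. True) u t"
    using wstep_subject_reduction wstep_subject_expansion unfolding transfers_typing_def by blast+
  then have "typable (plugC C t) \<longleftrightarrow> typable (plugC C u)" for C
    using transfers_typing_plugC transfers_typing_typable by blast
  then show "ctxeq t u"
    unfolding ctxeq_def using closed_wnorm_iff_typable by blast
next
  fix t u C assume "ctxeq t u"
  then show "ctxeq (plugC C t) (plugC C u)"
    unfolding ctxeq_def by (metis plugC_ctx_comp)
qed

end
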